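(* If the second-order Lagrangian $L$ is homogeneous, then its Hilbert forms satisfy $d^i_l\vartheta^m=\delta^i_l\vartheta^m-\delta^m_l\vartheta^i$ for all $i,l,m\in\{1,2\}$.
   Context: Let $E$ be a smooth manifold of dimension $n$ with local coordinates $(u^\alpha)$. For $k\ge 1$, $\mathcal F^k_{(2)}E$ denotes the bundle of $k$-th order 2-frames in $E$ (regular $k$-th order 2-velocities, i.e. $k$-jets at $0$ of maps $\mathbb R^2\to E$ of rank 2 at $0$), with induced coordinates $u^\alpha_{i_1\cdots i_s}$ ($0\le s\le k$, indices in $\{1,2\}$, totally symmetric in the subscripts). Pull-backs along the projections $\mathcal F^l_{(2)}E\to\mathcal F^k_{(2)}E$ are omitted. $\#(i_1\cdots i_s)$ denotes the number of distinct rearrangements of $(i_1,\dots,i_s)$; repeated indices in $\{1,2\}$ are summed. The total derivatives are the vector fields along $\mathcal F^{k+1}_{(2)}E\to\mathcal F^k_{(2)}E$ given by $\mathbf T_i=\sum_{s=0}^k \frac{1}{\#(i_1\cdots i_s)}u^\alpha_{i i_1\cdots i_s}\,\partial/\partial u^\alpha_{i_1\cdots i_s}$, and the vertical endomorphisms are the type $(1,1)$ tensor fields on $\mathcal F^{k+1}_{(2)}E$ given by $S^j=\sum_{s=0}^k \frac{s+1}{\#(i_1\cdots i_s)}\,\partial/\partial u^\alpha_{j i_1\cdots i_s}\otimes du^\alpha_{i_1\cdots i_s}$. The $S^i$ commute and $S^{i_1\cdots i_s}$ denotes their composite. On forms, $S^i$ acts as the degree-zero derivation $(S^i\omega)(X_1,\dots,X_r)=\sum_a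 \omega(X_1,\dots,S^iX_a,\dots,X_r)$ (zero on functions). The fundamental vector fields are $\Delta^{i_1\cdots i_s}_i=S^{i_1\cdots i_s}(\mathbf T_i)$, well-defined vector fields on $\mathcal F^{k+1}_{(2)}E$. Contraction with $\mathbf T_i$ and with $\Delta^{i_1\cdots i_s}_i$ is denoted $i_i$ and $i^{i_1\cdots i_s}_i$; the corresponding Lie derivatives are $d_i=d\,i_i+i_i\,d$ and $d^{i_1\cdots i_s}_i=d\,i^{i_1\cdots i_s}_i+i^{i_1\cdots i_s}_i d$. The $d_i$ commute and $d_{j_1\cdots j_s}$ denotes their composite. A second-order Lagrangian is a smooth function $L$ on (an open subset of) $\mathcal F^2_{(2)}E$; it is homogeneous if $d^i_jL=\delta^i_jL$ and $d^{ik}_jL=0$ for all $i,j,k$. Its Hilbert forms are the 1-forms $\vartheta^i=(S^i-\tfrac12 d_jS^{ji})\,dL$ on $\mathcal F^3_{(2)}E$. *)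

theory Defs
  imports "HOL-Analysis.Analysis"
begin

text \<open>A symmetric multi-index (i_1 ... i_s) with entries in {1,2} is determined by the
pair (a,b) = (number of 1s, number of 2s).  We only need orders s = a + b \<le> 3, since
all objects of the statement live on the third-order frame bundle.\<close>

typedef mi = "{(a::nat, b::nat). a + b \<le> 3}" morphisms mi_rep mi_abs
  by (rule exI[of _ "(0,0)"]) auto

instance mi :: finite
proof
  have fin: "finite {(a::nat, b::nat). a + b \<le> 3}"
    by (rule finite_subset[of _ "{0..3} \<times> {0..3}"]) auto
  have "(UNIV :: mi set) = mi_abs ` {(a::nat, b::nat). a + b \<le> 3}"
    using type_definition.Abs_image[OF type_definition_mi] by simp
  then show "finite (UNIV :: mi set)" using fin by (metis finite_imageI)
qed

definition mi_ord :: "mi \<Rightarrow> nat" where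
  "mi_ord m = fst (mi_rep m) + snd (mi_rep m)"

definition ms :: "nat list \<Rightarrow> mi" where
  "ms I = mi_abs (count_list I 1, count_list I 2)"

definition idx_lists :: "nat \<Rightarrow> nat list set" where
  "idx_lists s = {I. length I = s \<and> set I \<subseteq> {1, 2}}"

definition nperm :: "nat list \<Rightarrow> nat" where
  "nperm I = card {J. mset J = mset I}"

text \<open>Points of (a coordinate chart of) the third-order 2-frame bundle: the coordinate
u^alpha_I of the point x is  x $ (alpha, ms I);  'a indexes the coordinates of E
(so n = CARD('a)).  Functions on lower-order bundles are identified with their pull-backs.\<close>
type_synonym 'a pt = "real ^ ('a \<times> mi)"

definition regular_pt :: "'a::finite pt \<Rightarrow> bool" where
  "regular_pt x \<longleftrightarrow> (\<forall>a b :: real.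
      (\<forall>\<alpha>. a * x $ (\<alpha>, ms [1]) + b * x $ (\<alpha>, ms [2]) = 0) \<longrightarrow> a = 0 \<and> b = 0)"

definition pd :: "'c::finite \<Rightarrow> (real ^ 'c \<Rightarrow> real) \<Rightarrow> real ^ 'c \<Rightarrow> real" where
  "pd c f x = frechet_derivative f (at x) (axis c 1)"

primrec ck_on :: "nat \<Rightarrow> (real ^ 'c::finite) set \<Rightarrow> (real ^ 'c \<Rightarrow> real) \<Rightarrow> bool" where
  "ck_on 0 U f = continuous_on U f"
| "ck_on (Suc k) U f = (f differentiable_on U \<and> (\<forall>c. ck_on k U (pd c f)))"

definition smooth_on :: "(real ^ 'c::finite) set \<Rightarrow> (real ^ 'c \<Rightarrow> real) \<Rightarrow> bool" where
  "smooth_on U f \<longleftrightarrow> (\<forall>k. ck_on k U f)"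

text \<open>Vector fields, 1-forms and 2-forms are given by their components:
X = sum_c X x c * d/du_c,  omega = sum_c omega x c * du_c,
theta = (1/2) sum_{b,c} theta x b c * du_b wedge du_c  (theta x b c = theta(d/du_b, d/du_c)).\<close>
type_synonym 'c vf = "real ^ 'c \<Rightarrow> 'c \<Rightarrow> real"
type_synonym 'c form1 = "real ^ 'c \<Rightarrow> 'c \<Rightarrow> real"
type_synonym 'c form2 = "real ^ 'c \<Rightarrow> 'c \<Rightarrow> 'c \<Rightarrow> real"

definition dfun :: "(real ^ 'c::finite \<Rightarrow> real) \<Rightarrow> 'c form1" where
  "dfun f x c = pd c f x"

definition dform :: "'c::finite form1 \<Rightarrow> 'c form2" where
  "dform \<omega> x b c = pd b (\<lambda>y. \<omega> y c) x - pd c (\<lambda>y. \<omega> y b) x"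

definition ivf :: "'c::finite vf \<Rightarrow> 'c form1 \<Rightarrow> real ^ 'c \<Rightarrow> real" where
  "ivf X \<omega> x = (\<Sum>c\<in>UNIV. X x c * \<omega> x c)"

definition iform2 :: "'c::finite vf \<Rightarrow> 'c form2 \<Rightarrow> 'c form1" where
  "iform2 X \<theta> x c = (\<Sum>b\<in>UNIV. X x b * \<theta> x b c)"

definition lie_fun :: "'c::finite vf \<Rightarrow> (real ^ 'c \<Rightarrow> real) \<Rightarrow> real ^ 'c \<Rightarrow> real" where
  "lie_fun X f x = ivf X (dfun f) x"

definition lie_form :: "'c::finite vf \<Rightarrow> 'c form1 \<Rightarrow> 'c form1" where
  "lie_form X \<omega> x c = dfun (ivf X \<omega>) x c + iform2 X (dform \<omega>) x c"

text \<open>Total derivative T_i along F^{k+1} -> F^k (k \<le> 2):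
T_i = sum_{s=0}^k 1/#(i_1..i_s) u^alpha_{i i_1..i_s} d/du^alpha_{i_1..i_s}.\<close>
definition Tvf :: "nat \<Rightarrow> nat \<Rightarrow> ('a::finite \<times> mi) vf" where
  "Tvf k i x c = (\<Sum>s\<le>k. \<Sum>I\<in>idx_lists s. \<Sum>\<alpha>\<in>UNIV.
      (1 / real (nperm I)) * x $ (\<alpha>, ms (i # I)) * (if c = (\<alpha>, ms I) then 1 else 0))"

text \<open>Vertical endomorphism S^j on F^{k+1} (k \<le> 2) as a matrix: the (1,1) tensor
sum_{s=0}^k (s+1)/#(j i_1..i_s) d/du^alpha_{j i_1..i_s} (x) du^alpha_{i_1..i_s},
i.e. S^j(d/du_I) = (s+1) #(I)/#(jI) d/du_{jI}.
Smat k j tgt src is the coefficient of d/du_tgt (x) du_src.\<close>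
definition Smat :: "nat \<Rightarrow> nat \<Rightarrow> ('a::finite \<times> mi) \<Rightarrow> ('a \<times> mi) \<Rightarrow> real" where
  "Smat k j tgt src = (\<Sum>s\<le>k. \<Sum>I\<in>idx_lists s. \<Sum>\<alpha>\<in>UNIV.
      (real (s + 1) / real (nperm (j # I)))
        * (if tgt = (\<alpha>, ms (j # I)) then 1 else 0) * (if src = (\<alpha>, ms I) then 1 else 0))"

definition Svf :: "nat \<Rightarrow> nat \<Rightarrow> ('a::finite \<times> mi) vf \<Rightarrow> ('a \<times> mi) vf" where
  "Svf k j X x tgt = (\<Sum>src\<in>UNIV. Smat k j tgt src * X x src)"

definition Sform :: "nat \<Rightarrow> nat \<Rightarrow> ('a::finite \<times> mi) form1 \<Rightarrow> ('a \<times> mi) form1" where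
  "Sform k j \<omega> x src = (\<Sum>tgt\<in>UNIV. \<omega> x tgt * Smat k j tgt src)"

primrec Svfs :: "nat \<Rightarrow> nat list \<Rightarrow> ('a::finite \<times> mi) vf \<Rightarrow> ('a \<times> mi) vf" where
  "Svfs k [] X = X"
| "Svfs k (j # J) X = Svf k j (Svfs k J X)"

primrec Sforms :: "nat \<Rightarrow> nat list \<Rightarrow> ('a::finite \<times> mi) form1 \<Rightarrow> ('a \<times> mi) form1" where
  "Sforms k [] \<omega> = \<omega>"
| "Sforms k (j # J) \<omega> = Sform k j (Sforms k J \<omega>)"

definition Delta :: "nat \<Rightarrow> nat list \<Rightarrow> nat \<Rightarrow> ('a::finite \<times> mi) vf" where
  "Delta k I i = Svfs k I (Tvf k i)"

text \<open>L is a smooth function on an open subset of F^2 (here: on its preimage U in F^3,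
L not depending on the third-order coordinates).\<close>
definition second_order_lagrangian :: "'a::finite pt set \<Rightarrow> ('a pt \<Rightarrow> real) \<Rightarrow> bool" where
  "second_order_lagrangian U L \<longleftrightarrow>
     open U \<and> U \<subseteq> {x. regular_pt x} \<and> smooth_on U L \<and>
     (\<forall>x\<in>U. \<forall>y. (\<forall>\<alpha> m. mi_ord m \<le> 2 \<longrightarrow> y $ (\<alpha>, m) = x $ (\<alpha>, m)) \<longrightarrow> y \<in> U \<and> L y = L x)"

text \<open>Homogeneity: d^i_j L = delta^i_j L and d^{ik}_j L = 0 (fundamental fields on F^2, k = 1).\<close>
definition homogeneous :: "'a::finite pt set \<Rightarrow> ('a pt \<Rightarrow> real) \<Rightarrow> bool" where
  "homogeneous U L \<longleftrightarrow>
     (\<forall>x\<in>U. \<forall>i\<in>{1,2}. \<forall>j\<in>{1,2}.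
        lie_fun (Delta 1 [i] j) L x = (if i = j then L x else 0) \<and>
        (\<forall>k\<in>{1,2}. lie_fun (Delta 1 [i, k] j) L x = 0))"

text \<open>Hilbert forms theta^i = (S^i - 1/2 d_j S^{ji}) dL; S acts on forms on F^2 (k = 1) and
d_j is the Lie derivative along T_j : F^3 -> F^2 (k = 2), summed over j.\<close>
definition hilbert_form :: "('a::finite pt \<Rightarrow> real) \<Rightarrow> nat \<Rightarrow> ('a \<times> mi) form1" where
  "hilbert_form L i x c =
     Sforms 1 [i] (dfun L) x c
     - (1/2) * (\<Sum>j\<in>{1,2}. lie_form (Tvf 2 j) (Sforms 1 [j, i] (dfun L)) x c)"

end

theory Submission
  imports Defs "HOL-Combinatorics.Multiset_Permutations"
begin

(* The fundamental field Delta^i_l is a linear vector field u |-> D u in the coordinates u^alpha_I,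
   and everything reduces to three rules for Lie derivatives along linear fields X = D u:
   L_X commutes with d, so homogeneity (Delta^i_l L = delta^i_l L) gives L_X dL = delta^i_l dL;
   L_X (S omega) = S (L_X omega) + omega [S, D] for a constant (1,1)-tensor S;
   and [L_X, L_Y] = L_[X,Y], where the bracket of linear fields is again linear.
   On the finitely many multi-indices of order at most 3 one computes the commutators
   [S^k, Delta^i_l] = - delta^k_l S^i and [T_j, Delta^i_l] = delta^i_j T_l.
   Inserted into theta^m = S^m dL - 1/2 L_(T_j) S^j S^m dL, the two commutators contribute
   -/+ 1/2 L_(T_l) S^i S^m dL, which cancel; what remains is delta^i_l theta^m - delta^m_l theta^i. *)

section \<open>Partial derivatives\<close>

lemma pd_eq_of_has_derivative: "(f has_derivative f') (at x) \<Longrightarrow> pd c f x = f' (axis c 1)"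
  unfolding pd_def by (simp add: frechet_derivative_at[symmetric])

lemma pd_const [simp]: "pd c (\<lambda>y. a) x = 0"
  by (simp add: pd_eq_of_has_derivative[OF has_derivative_const])

lemma pd_add:
  fixes f g :: "real ^ 'c::finite \<Rightarrow> real"
  assumes "f differentiable at x" "g differentiable at x"
  shows "pd c (\<lambda>y. f y + g y) x = pd c f x + pd c g x"
  using pd_eq_of_has_derivative[OF has_derivative_add[OF assms[THEN frechet_derivative_works[THEN iffD1]]]]
  by (simp add: pd_def)

lemma pd_diff:
  fixes f g :: "real ^ 'c::finite \<Rightarrow> real"
  assumes "f differentiable at x" "g differentiable at x"
  shows "pd c (\<lambda>y. f y - g y) x = pd c f x - pd c g x"
  using pd_eq_of_has_derivative[OF has_derivative_diff[OF assms[THEN frechet_derivative_works[THEN iffD1]]]]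
  by (simp add: pd_def)

lemma pd_mult:
  fixes f g :: "real ^ 'c::finite \<Rightarrow> real"
  assumes "f differentiable at x" "g differentiable at x"
  shows "pd c (\<lambda>y. f y * g y) x = pd c f x * g x + f x * pd c g x"
  using pd_eq_of_has_derivative[OF has_derivative_mult[OF assms[THEN frechet_derivative_works[THEN iffD1]]]]
  by (simp add: pd_def)

lemma pd_cmult:
  fixes f :: "real ^ 'c::finite \<Rightarrow> real"
  assumes "f differentiable at x"
  shows "pd c (\<lambda>y. a * f y) x = a * pd c f x"
  using pd_mult[OF differentiable_const assms] by simp

lemma pd_sum:
  fixes f :: "'k \<Rightarrow> real ^ 'c::finite \<Rightarrow> real"
  assumes "\<And>k. k \<in> S \<Longrightarrow> f k differentiable at x"
  shows "pd c (\<lambda>y. \<Sum>k\<in>S. f k y) x = (\<Sum>k\<in>S. pd c (f k) x)"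
proof (cases "finite S")
  case True
  have "((\<lambda>y. \<Sum>k\<in>S. f k y) has_derivative (\<lambda>h. \<Sum>k\<in>S. frechet_derivative (f k) (at x) h)) (at x)"
    using assms by (intro has_derivative_sum) (simp add: frechet_derivative_works[symmetric])
  from pd_eq_of_has_derivative[OF this] show ?thesis by (simp add: pd_def)
qed simp

lemma pd_cong_open:
  assumes "open U" "x \<in> U" "\<And>y. y \<in> U \<Longrightarrow> f y = g y"
  shows "pd c f x = pd c g x"
proof -
  have "(f has_derivative f') (at x) \<longleftrightarrow> (g has_derivative f') (at x)" for f'
    using has_derivative_transform_within_open[OF _ assms(1,2)] assms(3) by metis
  then show ?thesis unfolding pd_def frechet_derivative_def by simp
qed

lemma pd_translate:
  fixes f :: "real ^ 'c::finite \<Rightarrow> real"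
  assumes "f differentiable at (x + w)"
  shows "pd c (\<lambda>y. f (y + w)) x = pd c f (x + w)"
proof -
  have "((\<lambda>y. y + w) has_derivative id) (at x)"
    by (auto intro!: derivative_eq_intros simp: id_def)
  from pd_eq_of_has_derivative[OF diff_chain_at[OF this frechet_derivative_works[THEN iffD1, OF assms]]]
  show ?thesis by (simp add: o_def pd_def)
qed

lemma smooth_on_pd: "smooth_on U f \<Longrightarrow> smooth_on U (pd c f)"
  unfolding smooth_on_def by (metis ck_on.simps(2))

lemma smooth_on_differentiable: "smooth_on U f \<Longrightarrow> open U \<Longrightarrow> x \<in> U \<Longrightarrow> f differentiable at x"
  unfolding smooth_on_def by (metis ck_on.simps(2) differentiable_on_eq_differentiable_at)

lemma smooth_on_continuous: "smooth_on U f \<Longrightarrow> continuous_on U f"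
  unfolding smooth_on_def by (metis ck_on.simps(1))

lemma differentiable_at_transform_open:
  assumes "f differentiable at x" "open U" "x \<in> U" "\<And>y. y \<in> U \<Longrightarrow> f y = g y"
  shows "g differentiable at x"
  using assms has_derivative_transform_within_open[OF _ assms(2,3)] unfolding differentiable_def by blast

lemma ck_on_cong:
  assumes "open U" "\<And>y. y \<in> U \<Longrightarrow> f y = g y" "ck_on k U f"
  shows "ck_on k U g"
  using assms(2,3)
proof (induction k arbitrary: f g)
  case 0
  then show ?case by (metis ck_on.simps(1) continuous_on_cong)
next
  case (Suc k)
  have "f differentiable at y" if "y \<in> U" for y
    using Suc.prems(2) that by (simp add: differentiable_on_eq_differentiable_at[OF assms(1)])
  then have "g differentiable_on U"
    using differentiable_at_transform_open[OF _ assms(1) _ Suc.prems(1)]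
    by (simp add: differentiable_on_eq_differentiable_at[OF assms(1)])
  moreover have "ck_on k U (pd c g)" for c
  proof (rule Suc.IH)
    show "pd c f y = pd c g y" if "y \<in> U" for y
      by (rule pd_cong_open[OF assms(1) that Suc.prems(1)])
  qed (use Suc.prems(2) in simp)
  ultimately show ?case by simp
qed

lemma ck_on_sum_mult:
  fixes f :: "'t \<Rightarrow> real ^ 'c::finite \<Rightarrow> real"
  assumes "open U" "finite T" "\<And>t. t \<in> T \<Longrightarrow> ck_on k U (f t)"
  shows "ck_on k U (\<lambda>y. \<Sum>t\<in>T. f t y * a t)"
  using assms(3)
proof (induction k arbitrary: f)
  case 0
  then show ?case by (auto intro!: continuous_intros)
next
  case (Suc k)
  have df: "f t differentiable at y" if "t \<in> T" "y \<in> U" for t y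
    using Suc.prems that by (simp add: differentiable_on_eq_differentiable_at[OF assms(1)])
  then have "(\<lambda>y. \<Sum>t\<in>T. f t y * a t) differentiable_on U"
    using assms(2) by (auto simp: differentiable_on_eq_differentiable_at[OF assms(1)] intro!: derivative_intros)
  moreover have "ck_on k U (pd c (\<lambda>y. \<Sum>t\<in>T. f t y * a t))" for c
  proof (rule ck_on_cong[OF assms(1)])
    show "ck_on k U (\<lambda>y. \<Sum>t\<in>T. pd c (f t) y * a t)"
      using Suc by simp
    show "(\<Sum>t\<in>T. pd c (f t) y * a t) = pd c (\<lambda>y. \<Sum>t\<in>T. f t y * a t) y" if "y \<in> U" for y
      using df[OF _ that] by (simp add: pd_sum pd_cmult mult.commute[of _ "a _"])
  qed
  ultimately show ?case by simp
qed

lemma smooth_on_sum_mult: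
  "open U \<Longrightarrow> finite T \<Longrightarrow> (\<And>t. t \<in> T \<Longrightarrow> smooth_on U (f t)) \<Longrightarrow>
    smooth_on U (\<lambda>y. \<Sum>t\<in>T. f t y * a t)"
  unfolding smooth_on_def by (blast intro: ck_on_sum_mult)

lemma has_real_derivative_axis:
  fixes g :: "real ^ 'c::finite \<Rightarrow> real"
  assumes "g differentiable at (y + t *\<^sub>R axis c 1)"
  shows "((\<lambda>t. g (y + t *\<^sub>R axis c 1)) has_real_derivative pd c g (y + t *\<^sub>R axis c 1)) (at t)"
proof -
  note g' = frechet_derivative_works[THEN iffD1, OF assms]
  have "((\<lambda>t. y + t *\<^sub>R axis c 1) has_derivative (\<lambda>s. s *\<^sub>R axis c 1)) (at t)"
    by (auto intro!: derivative_eq_intros)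
  from diff_chain_at[OF this g'] show ?thesis
    using linear_cmul[OF has_derivative_linear[OF g']]
    by (simp add: has_real_derivative_iff_has_vector_derivative has_vector_derivative_def o_def pd_def)
qed

lemma axis_mvt:
  fixes g :: "real ^ 'c::finite \<Rightarrow> real"
  assumes "0 < h" "\<And>t. 0 \<le> t \<Longrightarrow> t \<le> h \<Longrightarrow> g differentiable at (y + t *\<^sub>R axis c 1)"
  shows "\<exists>\<xi>. 0 < \<xi> \<and> \<xi> < h \<and> g (y + h *\<^sub>R axis c 1) - g y = h * pd c g (y + \<xi> *\<^sub>R axis c 1)"
  using MVT2[OF assms(1), of "\<lambda>t. g (y + t *\<^sub>R axis c 1)"] has_real_derivative_axis[OF assms(2)] by auto

lemma second_difference_mvt:
  fixes f :: "real ^ 'c::finite \<Rightarrow> real"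
  assumes U: "ball x r \<subseteq> U"
    and df: "\<And>y. y \<in> U \<Longrightarrow> f differentiable at y"
    and dfa: "\<And>y. y \<in> U \<Longrightarrow> pd a f differentiable at y"
    and h: "0 < h" "2 * h < r"
  shows "\<exists>p. dist p x < 2 * h \<and>
     f (x + h *\<^sub>R axis a 1 + h *\<^sub>R axis b 1) - f (x + h *\<^sub>R axis a 1) - f (x + h *\<^sub>R axis b 1) + f x
       = h * h * pd b (pd a f) p"
proof -
  define u :: "real ^ 'c" where "u = axis a 1"
  define v :: "real ^ 'c" where "v = axis b 1"
  have norm_uv: "norm (s *\<^sub>R u + t *\<^sub>R v) \<le> \<bar>s\<bar> + \<bar>t\<bar>" for s t
    using norm_triangle_ineq[of "s *\<^sub>R u" "t *\<^sub>R v"] by (simp add: u_def v_def)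
  have inU: "x + s *\<^sub>R u + t *\<^sub>R v \<in> U" if "0 \<le> s" "s \<le> h" "0 \<le> t" "t \<le> h" for s t
  proof -
    have "dist (x + s *\<^sub>R u + t *\<^sub>R v) x < r"
      using norm_uv[of s t] that h by (simp add: dist_norm add.assoc)
    then show ?thesis using U by (auto simp: dist_commute)
  qed
  define g where "g z = f (z + h *\<^sub>R v) - f z" for z
  have shift: "(\<lambda>z. f (z + h *\<^sub>R v)) differentiable at z" if "f differentiable at (z + h *\<^sub>R v)" for z
    using differentiable_compose[of f "\<lambda>z. z + h *\<^sub>R v" z UNIV] that by (simp add: derivative_intros)
  obtain \<xi> where \<xi>: "0 < \<xi>" "\<xi> < h" "g (x + h *\<^sub>R u) - g x = h * pd a g (x + \<xi> *\<^sub>R u)"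
  proof -
    have "g differentiable at (x + t *\<^sub>R u)" if "0 \<le> t" "t \<le> h" for t
      using df[OF inU[of t h]] df[OF inU[of t 0]] that h unfolding g_def
      by (intro derivative_intros shift) auto
    then show ?thesis using axis_mvt[OF h(1), of g x a, folded u_def] that by blast
  qed
  have g': "pd a g (x + \<xi> *\<^sub>R u) = pd a f (x + \<xi> *\<^sub>R u + h *\<^sub>R v) - pd a f (x + \<xi> *\<^sub>R u)"
  proof -
    have "f differentiable at (x + \<xi> *\<^sub>R u + h *\<^sub>R v)" "f differentiable at (x + \<xi> *\<^sub>R u)"
      using df inU[of \<xi> h] inU[of \<xi> 0] \<xi> h by auto
    then show ?thesis unfolding g_def
      by (simp add: pd_diff pd_translate shift)
  qed
  have "pd a f differentiable at (x + \<xi> *\<^sub>R u + t *\<^sub>R v)" if "0 \<le> t" "t \<le> h" for t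
    using dfa inU[of \<xi> t] that \<xi> by simp
  then obtain \<eta> where \<eta>: "0 < \<eta>" "\<eta> < h"
    "pd a f (x + \<xi> *\<^sub>R u + h *\<^sub>R v) - pd a f (x + \<xi> *\<^sub>R u) = h * pd b (pd a f) (x + \<xi> *\<^sub>R u + \<eta> *\<^sub>R v)"
    using axis_mvt[OF h(1), of "pd a f" "x + \<xi> *\<^sub>R u" b, folded v_def] by blast
  have "dist (x + \<xi> *\<^sub>R u + \<eta> *\<^sub>R v) x < 2 * h"
    using norm_uv[of \<xi> \<eta>] \<xi> \<eta> by (simp add: dist_norm add.assoc)
  moreover have "f (x + h *\<^sub>R u + h *\<^sub>R v) - f (x + h *\<^sub>R u) - f (x + h *\<^sub>R v) + f x
      = h * h * pd b (pd a f) (x + \<xi> *\<^sub>R u + \<eta> *\<^sub>R v)"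
    using \<xi>(3) \<eta>(3) by (simp add: g_def g')
  ultimately show ?thesis unfolding u_def v_def by blast
qed

(* Schwarz: both mixed partials are limits of the same second difference quotient. *)
lemma pd_commute:
  fixes f :: "real ^ 'c::finite \<Rightarrow> real"
  assumes U: "open U" and f: "smooth_on U f" and x: "x \<in> U"
  shows "pd a (pd b f) x = pd b (pd a f) x"
proof (rule ccontr)
  define g1 where "g1 = pd b (pd a f)"
  define g2 where "g2 = pd a (pd b f)"
  assume "pd a (pd b f) x \<noteq> pd b (pd a f) x"
  then have e: "\<bar>g1 x - g2 x\<bar> / 2 > 0" by (simp add: g1_def g2_def)
  have "isCont (pd d (pd e f)) x" for d e
    using smooth_on_continuous[OF smooth_on_pd[OF smooth_on_pd[OF f]]] U x
    by (simp add: continuous_on_eq_continuous_at)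
  then have "isCont g1 x" "isCont g2 x" by (simp_all add: g1_def g2_def)
  with e obtain d1 d2 where d1: "d1 > 0" "\<And>y. dist y x < d1 \<Longrightarrow> dist (g1 y) (g1 x) < \<bar>g1 x - g2 x\<bar> / 2"
    and d2: "d2 > 0" "\<And>y. dist y x < d2 \<Longrightarrow> dist (g2 y) (g2 x) < \<bar>g1 x - g2 x\<bar> / 2"
    unfolding continuous_at_eps_delta by blast
  obtain r where r: "r > 0" "ball x r \<subseteq> U" using U x open_contains_ball by blast
  define h where "h = min r (min d1 d2) / 4"
  have h: "0 < h" "2 * h < r" "2 * h < d1" "2 * h < d2" using r d1 d2 by (auto simp: h_def)
  have df: "\<And>y c. y \<in> U \<Longrightarrow> pd c f differentiable at y" "\<And>y. y \<in> U \<Longrightarrow> f differentiable at y"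
    using smooth_on_differentiable[OF smooth_on_pd[OF f] U] smooth_on_differentiable[OF f U] by auto
  obtain p1 where p1: "dist p1 x < 2 * h"
    "f (x + h *\<^sub>R axis a 1 + h *\<^sub>R axis b 1) - f (x + h *\<^sub>R axis a 1) - f (x + h *\<^sub>R axis b 1) + f x
       = h * h * g1 p1"
    using second_difference_mvt[OF r(2) df(2) df(1) h(1,2)] unfolding g1_def by blast
  obtain p2 where p2: "dist p2 x < 2 * h"
    "f (x + h *\<^sub>R axis b 1 + h *\<^sub>R axis a 1) - f (x + h *\<^sub>R axis b 1) - f (x + h *\<^sub>R axis a 1) + f x
       = h * h * g2 p2"
    using second_difference_mvt[OF r(2) df(2) df(1) h(1,2)] unfolding g2_def by blast
  have swap: "x + h *\<^sub>R axis b 1 + h *\<^sub>R axis a 1 = x + h *\<^sub>R axis a 1 + h *\<^sub>R axis b (1::real)"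
    by (simp add: add_ac)
  have "h * h * g1 p1 = h * h * g2 p2" using p1(2) p2(2)[unfolded swap] by linarith
  then have "g1 p1 = g2 p2" using h(1) by simp
  moreover have "dist (g1 p1) (g1 x) < \<bar>g1 x - g2 x\<bar> / 2" "dist (g2 p2) (g2 x) < \<bar>g1 x - g2 x\<bar> / 2"
    using d1(2)[of p1] d2(2)[of p2] p1(1) p2(1) h by auto
  ultimately show False unfolding dist_real_def by (simp add: abs_if split: if_splits)
qed

section \<open>Lie derivatives along linear vector fields\<close>

definition linear_vf :: "('c::finite \<Rightarrow> 'c \<Rightarrow> real) \<Rightarrow> 'c vf" where
  "linear_vf A x c = (\<Sum>d\<in>UNIV. A c d * x $ d)"

definition mat_mul :: "('c::finite \<Rightarrow> 'c \<Rightarrow> real) \<Rightarrow> ('c \<Rightarrow> 'c \<Rightarrow> real) \<Rightarrow> 'c \<Rightarrow> 'c \<Rightarrow> real" where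
  "mat_mul A B u v = (\<Sum>w\<in>UNIV. A u w * B w v)"

definition mat_bracket :: "('c::finite \<Rightarrow> 'c \<Rightarrow> real) \<Rightarrow> ('c \<Rightarrow> 'c \<Rightarrow> real) \<Rightarrow> 'c \<Rightarrow> 'c \<Rightarrow> real" where
  "mat_bracket A B u v = mat_mul A B u v - mat_mul B A u v"

definition form_mat :: "('c::finite \<Rightarrow> 'c \<Rightarrow> real) \<Rightarrow> 'c form1 \<Rightarrow> 'c form1" where
  "form_mat P \<omega> x c = (\<Sum>t\<in>UNIV. \<omega> x t * P t c)"

definition smooth_form_on :: "(real ^ 'c::finite) set \<Rightarrow> 'c form1 \<Rightarrow> bool" where
  "smooth_form_on U \<omega> \<longleftrightarrow> (\<forall>c. smooth_on U (\<lambda>y. \<omega> y c))"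

lemma linear_vf_has_derivative: "((\<lambda>y. linear_vf A y b) has_derivative (\<lambda>h. linear_vf A h b)) (at x)"
proof -
  have "bounded_linear (\<lambda>h. linear_vf A h b)"
    unfolding linear_vf_def by (intro bounded_linear_sum bounded_linear_const_mult bounded_linear_vec_nth)
  then show ?thesis by (rule bounded_linear_imp_has_derivative)
qed

lemma linear_vf_differentiable [simp, derivative_intros]: "(\<lambda>y. linear_vf A y b) differentiable at x"
  using linear_vf_has_derivative differentiable_def by blast

lemma pd_linear_vf [simp]: "pd c (\<lambda>y. linear_vf A y b) x = A b c"
proof -
  have "pd c (\<lambda>y. linear_vf A y b) x = linear_vf A (axis c 1) b"
    by (rule pd_eq_of_has_derivative[OF linear_vf_has_derivative])
  also have "\<dots> = A b c"
    by (simp add: linear_vf_def axis_def if_distrib cong: if_cong)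
  finally show ?thesis .
qed

lemma linear_vf_mat_mul: "linear_vf (mat_mul A B) x b = (\<Sum>e\<in>UNIV. A b e * linear_vf B x e)"
  unfolding linear_vf_def mat_mul_def sum_distrib_left sum_distrib_right mult.assoc
  by (rule sum.swap)

lemma lie_form_cong_open:
  assumes "open U" "x \<in> U" "\<And>y b. y \<in> U \<Longrightarrow> \<omega> y b = \<eta> y b"
  shows "lie_form X \<omega> x c = lie_form X \<eta> x c"
proof -
  have "pd b (ivf X \<omega>) x = pd b (ivf X \<eta>) x" for b
    by (rule pd_cong_open[OF assms(1,2)]) (simp add: ivf_def assms(3))
  moreover have "pd b (\<lambda>y. \<omega> y e) x = pd b (\<lambda>y. \<eta> y e) x" for b e
    by (rule pd_cong_open[OF assms(1,2)]) (simp add: assms(3))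
  ultimately show ?thesis using assms(2,3) by (simp add: lie_form_def dfun_def iform2_def dform_def)
qed

lemma lie_form_linear_vf:
  assumes "\<And>b. (\<lambda>y. \<omega> y b) differentiable at x"
  shows "lie_form (linear_vf A) \<omega> x c =
    form_mat A \<omega> x c + (\<Sum>b\<in>UNIV. linear_vf A x b * pd b (\<lambda>y. \<omega> y c) x)"
proof -
  have "dfun (ivf (linear_vf A) \<omega>) x c = (\<Sum>b\<in>UNIV. pd c (\<lambda>y. linear_vf A y b * \<omega> y b) x)"
    unfolding dfun_def ivf_def by (rule pd_sum) (simp add: assms differentiable_mult)
  also have "\<dots> = (\<Sum>b\<in>UNIV. A b c * \<omega> x b + linear_vf A x b * pd c (\<lambda>y. \<omega> y b) x)"
    by (simp add: pd_mult assms)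
  finally have "dfun (ivf (linear_vf A) \<omega>) x c = form_mat A \<omega> x c
      + (\<Sum>b\<in>UNIV. linear_vf A x b * pd c (\<lambda>y. \<omega> y b) x)"
    by (simp add: sum.distrib form_mat_def mult.commute)
  moreover have "iform2 (linear_vf A) (dform \<omega>) x c =
      (\<Sum>b\<in>UNIV. linear_vf A x b * pd b (\<lambda>y. \<omega> y c) x) - (\<Sum>b\<in>UNIV. linear_vf A x b * pd c (\<lambda>y. \<omega> y b) x)"
    by (simp add: iform2_def dform_def right_diff_distrib sum_subtractf)
  ultimately show ?thesis by (simp add: lie_form_def)
qed

lemma lie_form_zero [simp]: "lie_form (\<lambda>x c. 0) \<omega> x c = 0"
  by (simp add: lie_form_def ivf_def[abs_def] iform2_def dfun_def)

lemma linear_vf_zero [simp]: "linear_vf (\<lambda>u v. 0) = (\<lambda>x c. 0)"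
  by (simp add: fun_eq_iff linear_vf_def)

lemma lie_form_dfun:
  assumes "open U" "smooth_on U f" "x \<in> U"
  shows "lie_form X (dfun f) x c = dfun (lie_fun X f) x c"
proof -
  have "dform (dfun f) x b c = 0" for b
    using pd_commute[OF assms] by (simp add: dform_def dfun_def)
  then show ?thesis by (simp add: lie_form_def iform2_def lie_fun_def[abs_def])
qed

lemma form_mat_form_mat: "form_mat B (form_mat A \<omega>) x c = form_mat (mat_mul A B) \<omega> x c"
  unfolding form_mat_def mat_mul_def sum_distrib_left sum_distrib_right mult.assoc
  by (rule sum.swap)

lemma form_mat_mat_bracket:
  "form_mat (mat_bracket A B) \<omega> x c = form_mat (mat_mul A B) \<omega> x c - form_mat (mat_mul B A) \<omega> x c"
  by (simp add: form_mat_def mat_bracket_def right_diff_distrib sum_subtractf)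

lemma linear_vf_mat_bracket:
  "linear_vf (mat_bracket A B) x b = linear_vf (mat_mul A B) x b - linear_vf (mat_mul B A) x b"
  by (simp add: linear_vf_def mat_bracket_def left_diff_distrib sum_subtractf)

lemma form_mat_differentiable:
  assumes "\<And>b. (\<lambda>y. \<omega> y b) differentiable at x"
  shows "(\<lambda>y. form_mat P \<omega> y c) differentiable at x"
  unfolding form_mat_def using assms by (intro differentiable_sum differentiable_mult differentiable_const) auto

lemma pd_form_mat:
  assumes "\<And>b. (\<lambda>y. \<omega> y b) differentiable at x"
  shows "pd e (\<lambda>y. form_mat P \<omega> y c) x = form_mat P (\<lambda>y b. pd e (\<lambda>z. \<omega> z b) y) x c"
  unfolding form_mat_def using assms
  by (simp add: pd_sum differentiable_mult pd_mult)

lemma lie_form_linear_vf_diff: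
  assumes d\<omega>: "\<And>b. (\<lambda>y. \<omega> y b) differentiable at x" and d\<eta>: "\<And>b. (\<lambda>y. \<eta> y b) differentiable at x"
  shows "lie_form (linear_vf A) (\<lambda>y b. \<omega> y b - \<eta> y b) x c =
    lie_form (linear_vf A) \<omega> x c - lie_form (linear_vf A) \<eta> x c"
proof -
  have "(\<lambda>y. \<omega> y b - \<eta> y b) differentiable at x" for b
    using d\<omega> d\<eta> by (rule differentiable_diff)
  then show ?thesis
    using d\<omega> d\<eta> by (simp add: lie_form_linear_vf pd_diff form_mat_def sum_subtractf
        left_diff_distrib right_diff_distrib)
qed

lemma lie_form_linear_vf_scale:
  assumes d\<omega>: "\<And>b. (\<lambda>y. \<omega> y b) differentiable at x"
  shows "lie_form (linear_vf A) (\<lambda>y b. a * \<omega> y b) x c = a * lie_form (linear_vf A) \<omega> x c"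
proof -
  have "(\<lambda>y. a * \<omega> y b) differentiable at x" for b
    using d\<omega> by (simp add: differentiable_mult)
  then show ?thesis
    using d\<omega> by (simp add: lie_form_linear_vf pd_cmult form_mat_def sum_distrib_left
        distrib_left mult.left_commute mult.assoc)
qed

lemma lie_form_linear_vf_sum:
  assumes "finite K" and d\<omega>: "\<And>k b. k \<in> K \<Longrightarrow> (\<lambda>y. \<omega> k y b) differentiable at x"
  shows "lie_form (linear_vf A) (\<lambda>y b. \<Sum>k\<in>K. \<omega> k y b) x c = (\<Sum>k\<in>K. lie_form (linear_vf A) (\<omega> k) x c)"
proof -
  have d: "(\<lambda>y. \<Sum>k\<in>K. \<omega> k y b) differentiable at x" for b
    using assms(1) d\<omega> by (simp add: differentiable_sum)
  have "form_mat A (\<lambda>y b. \<Sum>k\<in>K. \<omega> k y b) x c = (\<Sum>k\<in>K. form_mat A (\<omega> k) x c)"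
    unfolding form_mat_def sum_distrib_right by (rule sum.swap)
  moreover have "pd b (\<lambda>y. \<Sum>k\<in>K. \<omega> k y c) x = (\<Sum>k\<in>K. pd b (\<lambda>y. \<omega> k y c) x)" for b
    by (rule pd_sum) (rule d\<omega>)
  then have "(\<Sum>b\<in>UNIV. linear_vf A x b * pd b (\<lambda>y. \<Sum>k\<in>K. \<omega> k y c) x) =
      (\<Sum>k\<in>K. \<Sum>b\<in>UNIV. linear_vf A x b * pd b (\<lambda>y. \<omega> k y c) x)"
    by (simp only: sum_distrib_left) (rule sum.swap)
  ultimately show ?thesis
    using d d\<omega> by (simp add: lie_form_linear_vf sum.distrib)
qed

lemma lie_form_linear_vf_form_mat:
  assumes d\<omega>: "\<And>b. (\<lambda>y. \<omega> y b) differentiable at x"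
  shows "lie_form (linear_vf A) (form_mat P \<omega>) x c =
    form_mat P (lie_form (linear_vf A) \<omega>) x c + form_mat (mat_bracket P A) \<omega> x c"
proof -
  define \<omega>' where "\<omega>' t = (\<Sum>b\<in>UNIV. linear_vf A x b * pd b (\<lambda>y. \<omega> y t) x)" for t
  have "(\<Sum>b\<in>UNIV. linear_vf A x b * pd b (\<lambda>y. form_mat P \<omega> y c) x) = (\<Sum>t\<in>UNIV. \<omega>' t * P t c)"
    unfolding pd_form_mat[OF d\<omega>]
    unfolding \<omega>'_def form_mat_def sum_distrib_left sum_distrib_right mult.assoc
    by (rule sum.swap)
  then have "lie_form (linear_vf A) (form_mat P \<omega>) x c = form_mat (mat_mul P A) \<omega> x c + (\<Sum>t\<in>UNIV. \<omega>' t * P t c)"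
    by (simp add: lie_form_linear_vf form_mat_differentiable d\<omega> form_mat_form_mat)
  moreover have "form_mat P (lie_form (linear_vf A) \<omega>) x c = form_mat (mat_mul A P) \<omega> x c + (\<Sum>t\<in>UNIV. \<omega>' t * P t c)"
    using d\<omega> by (simp add: form_mat_def[of P] lie_form_linear_vf \<omega>'_def distrib_right sum.distrib
        form_mat_form_mat[symmetric])
  ultimately show ?thesis by (simp add: form_mat_mat_bracket)
qed

lemma smooth_form_on_dfun: "smooth_on U f \<Longrightarrow> smooth_form_on U (dfun f)"
  by (simp add: smooth_form_on_def dfun_def smooth_on_pd)

lemma smooth_form_on_form_mat: "open U \<Longrightarrow> smooth_form_on U \<omega> \<Longrightarrow> smooth_form_on U (form_mat P \<omega>)"
  unfolding smooth_form_on_def form_mat_def by (auto intro!: smooth_on_sum_mult)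

lemma smooth_form_on_differentiable:
  "smooth_form_on U \<omega> \<Longrightarrow> open U \<Longrightarrow> x \<in> U \<Longrightarrow> (\<lambda>y. \<omega> y c) differentiable at x"
  unfolding smooth_form_on_def by (blast intro: smooth_on_differentiable)

lemma lie_form_linear_vf_on:
  assumes "open U" "smooth_form_on U \<omega>" "y \<in> U"
  shows "lie_form (linear_vf A) \<omega> y c =
    form_mat A \<omega> y c + (\<Sum>b\<in>UNIV. linear_vf A y b * pd b (\<lambda>z. \<omega> z c) y)"
  using assms by (simp add: lie_form_linear_vf smooth_form_on_differentiable)

lemma lie_form_linear_vf_differentiable:
  assumes U: "open U" "x \<in> U" and \<omega>: "smooth_form_on U \<omega>"
  shows "(\<lambda>y. lie_form (linear_vf A) \<omega> y c) differentiable at x"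
proof (rule differentiable_at_transform_open[OF _ U])
  have "(\<lambda>y. pd b (\<lambda>z. \<omega> z c) y) differentiable at x" for b
    using \<omega> U unfolding smooth_form_on_def by (blast intro: smooth_on_differentiable smooth_on_pd)
  then show "(\<lambda>y. form_mat A \<omega> y c + (\<Sum>b\<in>UNIV. linear_vf A y b * pd b (\<lambda>z. \<omega> z c) y)) differentiable at x"
    using smooth_form_on_differentiable[OF \<omega> U(1,2)]
    by (simp add: form_mat_differentiable differentiable_mult)
qed (simp add: lie_form_linear_vf_on[OF U(1) \<omega>])

(* The last three sums are symmetric in A and B, the last one by pd_commute. *)
lemma lie_form_linear_vf_twice:
  assumes U: "open U" "x \<in> U" and \<omega>: "smooth_form_on U \<omega>"
  shows "lie_form (linear_vf A) (lie_form (linear_vf B) \<omega>) x c =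
    form_mat (mat_mul B A) \<omega> x c + (\<Sum>b\<in>UNIV. linear_vf (mat_mul B A) x b * pd b (\<lambda>y. \<omega> y c) x)
    + (\<Sum>e\<in>UNIV. \<Sum>b\<in>UNIV. A e c * linear_vf B x b * pd b (\<lambda>y. \<omega> y e) x)
    + (\<Sum>e\<in>UNIV. \<Sum>b\<in>UNIV. linear_vf A x e * B b c * pd e (\<lambda>y. \<omega> y b) x)
    + (\<Sum>e\<in>UNIV. \<Sum>b\<in>UNIV. linear_vf A x e * linear_vf B x b * pd e (pd b (\<lambda>y. \<omega> y c)) x)"
proof -
  have d\<omega>: "(\<lambda>y. \<omega> y b) differentiable at x" for b
    by (rule smooth_form_on_differentiable[OF \<omega> U])
  have d\<omega>': "pd e (\<lambda>y. \<omega> y b) differentiable at x" for e b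
    using \<omega> U unfolding smooth_form_on_def by (blast intro: smooth_on_differentiable smooth_on_pd)
  have form_part: "form_mat A (lie_form (linear_vf B) \<omega>) x c = form_mat (mat_mul B A) \<omega> x c
      + (\<Sum>e\<in>UNIV. \<Sum>b\<in>UNIV. A e c * linear_vf B x b * pd b (\<lambda>y. \<omega> y e) x)"
    using d\<omega> by (simp add: form_mat_def[of A] lie_form_linear_vf distrib_left sum.distrib
        sum_distrib_left mult_ac form_mat_form_mat[symmetric])
  have pd_part: "pd e (\<lambda>y. lie_form (linear_vf B) \<omega> y c) x =
      (\<Sum>b\<in>UNIV. B b c * pd e (\<lambda>y. \<omega> y b) x)
      + (\<Sum>b\<in>UNIV. B b e * pd b (\<lambda>y. \<omega> y c) x + linear_vf B x b * pd e (pd b (\<lambda>y. \<omega> y c)) x)" for e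
  proof -
    have "pd e (\<lambda>y. lie_form (linear_vf B) \<omega> y c) x =
        pd e (\<lambda>y. form_mat B \<omega> y c + (\<Sum>b\<in>UNIV. linear_vf B y b * pd b (\<lambda>z. \<omega> z c) y)) x"
      by (rule pd_cong_open[OF U]) (rule lie_form_linear_vf_on[OF U(1) \<omega>])
    then show ?thesis
      using d\<omega> d\<omega>' by (simp add: pd_add pd_sum pd_mult pd_form_mat form_mat_differentiable
          differentiable_mult form_mat_def mult.commute)
  qed
  have "(\<Sum>e\<in>UNIV. \<Sum>b\<in>UNIV. linear_vf A x e * (B b e * pd b (\<lambda>y. \<omega> y c) x)) =
      (\<Sum>b\<in>UNIV. linear_vf (mat_mul B A) x b * pd b (\<lambda>y. \<omega> y c) x)"
    unfolding linear_vf_mat_mul sum_distrib_right by (subst sum.swap) (simp add: mult_ac)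
  then show ?thesis
    using lie_form_linear_vf_differentiable[OF U \<omega>]
    by (simp add: lie_form_linear_vf form_part pd_part distrib_left sum.distrib
        sum_distrib_left mult.assoc add.assoc)
qed

lemma lie_form_linear_vf_bracket:
  assumes U: "open U" "x \<in> U" and \<omega>: "smooth_form_on U \<omega>"
  shows "lie_form (linear_vf A) (lie_form (linear_vf B) \<omega>) x c
    - lie_form (linear_vf B) (lie_form (linear_vf A) \<omega>) x c
    = lie_form (linear_vf (mat_bracket B A)) \<omega> x c"
proof -
  have "(\<Sum>e\<in>UNIV. \<Sum>b\<in>UNIV. P e c * linear_vf Q x b * pd b (\<lambda>y. \<omega> y e) x) =
      (\<Sum>e\<in>UNIV. \<Sum>b\<in>UNIV. linear_vf Q x e * P b c * pd e (\<lambda>y. \<omega> y b) x)" for P Q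
    by (subst sum.swap) (simp add: mult_ac)
  moreover have "(\<Sum>e\<in>UNIV. \<Sum>b\<in>UNIV. linear_vf A x e * linear_vf B x b * pd e (pd b (\<lambda>y. \<omega> y c)) x) =
      (\<Sum>e\<in>UNIV. \<Sum>b\<in>UNIV. linear_vf B x e * linear_vf A x b * pd e (pd b (\<lambda>y. \<omega> y c)) x)"
  proof -
    have "smooth_on U (\<lambda>y. \<omega> y c)" using \<omega> by (simp add: smooth_form_on_def)
    from pd_commute[OF U(1) this U(2)] show ?thesis
      by (subst sum.swap) (simp add: mult_ac)
  qed
  ultimately show ?thesis
    using smooth_form_on_differentiable[OF \<omega> U]
    by (simp add: lie_form_linear_vf_twice[OF U \<omega>] lie_form_linear_vf form_mat_mat_bracket
        linear_vf_mat_bracket left_diff_distrib sum_subtractf)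
qed

section \<open>Coordinate matrices on the frame bundle\<close>

definition mi_pairs :: "(nat \<times> nat) set" where
  "mi_pairs = {(a, b). a + b \<le> 3}"

lemma mi_pairs_cases:
  assumes "p \<in> mi_pairs"
  obtains "p = (0,0)" | "p = (1,0)" | "p = (0,1)" | "p = (2,0)" | "p = (1,1)" | "p = (0,2)"
    | "p = (3,0)" | "p = (2,1)" | "p = (1,2)" | "p = (0,3)"
proof -
  obtain a b where p: "p = (a, b)" "a + b \<le> 3" using assms by (auto simp: mi_pairs_def)
  then have "a = 0 \<and> b = 0 \<or> a = 1 \<and> b = 0 \<or> a = 0 \<and> b = 1 \<or> a = 2 \<and> b = 0 \<or> a = 1 \<and> b = 1
    \<or> a = 0 \<and> b = 2 \<or> a = 3 \<and> b = 0 \<or> a = 2 \<and> b = 1 \<or> a = 1 \<and> b = 2 \<or> a = 0 \<and> b = 3" by arith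
  then show ?thesis using that p by (elim disjE) auto
qed

lemma mi_pairs_eq: "mi_pairs = {(0,0),(1,0),(0,1),(2,0),(1,1),(0,2),(3,0),(2,1),(1,2),(0,3)}"
proof (intro set_eqI iffI)
  fix p assume "p \<in> mi_pairs"
  then show "p \<in> {(0,0),(1,0),(0,1),(2,0),(1,1),(0,2),(3,0),(2,1),(1,2),(0,3)}"
    by (cases rule: mi_pairs_cases) simp_all
qed (auto simp: mi_pairs_def)

lemma mi_rep_in_mi_pairs: "mi_rep B \<in> mi_pairs"
  using mi_rep by (simp add: mi_pairs_def)

lemma sum_UNIV_mi: "(\<Sum>C\<in>UNIV. g (mi_rep C)) = (\<Sum>r\<in>mi_pairs. g r)"
proof -
  have "mi_rep ` UNIV = mi_pairs"
    using type_definition.Rep_range[OF type_definition_mi] by (simp add: mi_pairs_def)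
  moreover have "inj mi_rep" by (meson injI mi_rep_inject)
  ultimately show ?thesis using sum.reindex[of mi_rep UNIV g] by simp
qed

lemma mi_rep_ms:
  assumes "set I \<subseteq> {1,2}" "length I \<le> 3"
  shows "mi_rep (ms I) = (count_list I 1, count_list I 2)"
proof -
  have "count_list I 1 + count_list I 2 = length I"
    using assms(1) by (induction I) auto
  then show ?thesis
    unfolding ms_def using assms(2) by (simp add: mi_abs_inverse)
qed

lemma ms_eq_iff_mi_rep:
  "set I \<subseteq> {1,2} \<Longrightarrow> length I \<le> 3 \<Longrightarrow> B = ms I \<longleftrightarrow> mi_rep B = (count_list I 1, count_list I 2)"
  by (metis mi_rep_inject mi_rep_ms)

definition mi_mul :: "(nat \<times> nat \<Rightarrow> nat \<times> nat \<Rightarrow> real) \<Rightarrow> (nat \<times> nat \<Rightarrow> nat \<times> nat \<Rightarrow> real) \<Rightarrow>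
    nat \<times> nat \<Rightarrow> nat \<times> nat \<Rightarrow> real" where
  "mi_mul a b p q = (\<Sum>r\<in>mi_pairs. a p r * b r q)"

definition mi_mat :: "(nat \<times> nat \<Rightarrow> nat \<times> nat \<Rightarrow> real) \<Rightarrow> ('a \<times> mi) \<Rightarrow> ('a \<times> mi) \<Rightarrow> real" where
  "mi_mat a u v = (if fst u = fst v then a (mi_rep (snd u)) (mi_rep (snd v)) else 0)"

lemma mi_mat_cong: "(\<And>p q. p \<in> mi_pairs \<Longrightarrow> q \<in> mi_pairs \<Longrightarrow> a p q = b p q) \<Longrightarrow> mi_mat a = mi_mat b"
  unfolding mi_mat_def by (intro ext) (simp add: mi_rep_in_mi_pairs)

lemma mat_mul_mi_mat: "mat_mul (mi_mat a) (mi_mat b) = (mi_mat (mi_mul a b) :: ('a::finite \<times> mi) \<Rightarrow> _)"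
proof (intro ext)
  fix u v :: "'a \<times> mi"
  have "mat_mul (mi_mat a) (mi_mat b) u v = (\<Sum>\<gamma>\<in>UNIV. \<Sum>C\<in>UNIV. mi_mat a u (\<gamma>, C) * mi_mat b (\<gamma>, C) v)"
    unfolding mat_mul_def UNIV_Times_UNIV[symmetric] sum.cartesian_product by simp
  also have "\<dots> = (\<Sum>\<gamma>\<in>UNIV. if \<gamma> = fst u then \<Sum>C\<in>UNIV. mi_mat a u (\<gamma>, C) * mi_mat b (\<gamma>, C) v else 0)"
    by (intro sum.cong refl) (auto simp: mi_mat_def)
  also have "\<dots> = (\<Sum>C\<in>UNIV. mi_mat a u (fst u, C) * mi_mat b (fst u, C) v)"
    by simp
  also have "\<dots> = mi_mat (mi_mul a b) u v"
    using sum_UNIV_mi[of "\<lambda>r. a (mi_rep (snd u)) r * b r (mi_rep (snd v))"]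
    by (simp add: mi_mat_def mi_mul_def)
  finally show "mat_mul (mi_mat a) (mi_mat b) u v = mi_mat (mi_mul a b) u v" .
qed

lemma mat_bracket_mi_mat:
  assumes "\<And>p q. p \<in> mi_pairs \<Longrightarrow> q \<in> mi_pairs \<Longrightarrow> mi_mul a b p q - mi_mul b a p q = r p q"
  shows "mat_bracket (mi_mat a) (mi_mat b) = (mi_mat r :: ('a::finite \<times> mi) \<Rightarrow> _)"
  using assms by (intro ext) (simp add: mat_bracket_def mat_mul_mi_mat mi_mat_def mi_rep_in_mi_pairs)

lemma sum_indicator_pair:
  fixes u :: "'a::finite \<times> 'b"
  shows "(\<Sum>\<alpha>\<in>UNIV. c * (if u = (\<alpha>, X) then 1 else 0) * (if v = (\<alpha>, Y) then 1 else 0)) =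
    (if fst u = fst v \<and> snd u = X \<and> snd v = Y then (c::real) else 0)"
proof -
  have eq: "(\<lambda>\<alpha>. c * (if u = (\<alpha>, X) then 1 else 0) * (if v = (\<alpha>, Y) then 1 else 0)) =
      (\<lambda>\<alpha>. if \<alpha> = fst u then (if fst u = fst v \<and> snd u = X \<and> snd v = Y then c else 0) else 0)"
    by (auto simp: prod_eq_iff fun_eq_iff)
  show ?thesis unfolding eq sum.delta by simp
qed

lemma sum_indicator:
  fixes f :: "'c::finite \<Rightarrow> real"
  shows "(\<Sum>d\<in>UNIV. a * (if d = p then 1 else 0) * b * f d) = a * f p * b"
proof -
  have eq: "(\<lambda>d. a * (if d = p then 1 else 0) * b * f d) = (\<lambda>d. if d = p then a * f p * b else 0)"
    by auto
  show ?thesis unfolding eq sum.delta by simp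
qed

lemma sum_product_swap:
  "finite S \<Longrightarrow> (\<Sum>d\<in>UNIV. (\<Sum>t\<in>S. f t d) * (y d :: real)) = (\<Sum>t\<in>S. \<Sum>d\<in>UNIV. f t d * y d)"
  unfolding sum_distrib_right by (rule sum.swap)

lemma finite_idx_lists: "finite (idx_lists s)"
proof -
  have "idx_lists s \<subseteq> {I. set I \<subseteq> {1,2} \<and> length I = s}" by (auto simp: idx_lists_def)
  then show ?thesis using finite_lists_length_eq[of "{1::nat,2}" s] by (rule finite_subset) simp
qed

(* The common shape of S^j and of the transposed matrix of T_j: weights w s I on the
   entries taking u^alpha_I to u^alpha_(j I), for |I| = s \<le> k. *)
definition shift_mat :: "nat \<Rightarrow> nat \<Rightarrow> (nat \<Rightarrow> nat list \<Rightarrow> real) \<Rightarrow> ('a::finite \<times> mi) \<Rightarrow> ('a \<times> mi) \<Rightarrow> real" where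
  "shift_mat k j w u v = (\<Sum>s\<le>k. \<Sum>I\<in>idx_lists s. \<Sum>\<alpha>\<in>UNIV.
      w s I * (if u = (\<alpha>, ms (j # I)) then 1 else 0) * (if v = (\<alpha>, ms I) then 1 else 0))"

definition shift_coef :: "nat \<Rightarrow> nat \<Rightarrow> (nat \<Rightarrow> nat list \<Rightarrow> real) \<Rightarrow> nat \<times> nat \<Rightarrow> nat \<times> nat \<Rightarrow> real" where
  "shift_coef k j w p q = (\<Sum>s\<le>k. \<Sum>I\<in>idx_lists s.
      if p = (count_list (j # I) 1, count_list (j # I) 2) \<and> q = (count_list I 1, count_list I 2)
      then w s I else 0)"

lemma shift_mat_mi_mat:
  assumes "k \<le> 2" "j \<in> {1,2}"
  shows "shift_mat k j w = mi_mat (shift_coef k j w)"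
proof (intro ext)
  fix u v :: "'a::finite \<times> mi"
  have "(if fst u = fst v \<and> snd u = ms (j # I) \<and> snd v = ms I then w s I else 0)
      = (if fst u = fst v then if mi_rep (snd u) = (count_list (j # I) 1, count_list (j # I) 2)
           \<and> mi_rep (snd v) = (count_list I 1, count_list I 2) then w s I else 0 else 0)"
    if "s \<le> k" "I \<in> idx_lists s" for s I
  proof -
    have "set I \<subseteq> {1,2}" "length I \<le> 2" "set (j # I) \<subseteq> {1,2}" "length (j # I) \<le> 3"
      using that assms by (auto simp: idx_lists_def)
    then show ?thesis
      using ms_eq_iff_mi_rep[of I "snd v"] ms_eq_iff_mi_rep[of "j # I" "snd u"] by auto
  qed
  then show "shift_mat k j w u v = mi_mat (shift_coef k j w) u v"
    by (simp add: shift_mat_def sum_indicator_pair mi_mat_def shift_coef_def)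
qed

lemma nperm_eq_mset: "mset I = mset J \<Longrightarrow> nperm I = nperm J"
  unfolding nperm_def by simp

lemma nperm_values:
  "nperm [] = 1" "nperm [1] = 1" "nperm [2] = 1"
  "nperm [1,1] = 1" "nperm [1,2] = 2" "nperm [2,1] = 2" "nperm [2,2] = 1"
  "nperm [1,1,1] = 1" "nperm [1,1,2] = 3" "nperm [1,2,1] = 3" "nperm [2,1,1] = 3"
  "nperm [2,2,2] = 1" "nperm [2,2,1] = 3" "nperm [2,1,2] = 3" "nperm [1,2,2] = 3"
proof -
  have count: "nperm I = fact (length I) div (\<Prod>x\<in>set_mset (mset I). fact (count (mset I) x))" for I
    unfolding nperm_def using card_permutations_of_multiset(1)[of "mset I"]
    by (simp add: permutations_of_multiset_def)
  show "nperm [] = 1" "nperm [1] = 1" "nperm [2] = 1" "nperm [1,1] = 1" "nperm [1,2] = 2"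
    "nperm [2,2] = 1" "nperm [1,1,1] = 1" "nperm [1,1,2] = 3" "nperm [2,2,2] = 1" "nperm [1,2,2] = 3"
    by (simp add: count fact_numeral, presburger?)+
  then show "nperm [2,1] = 2" "nperm [1,2,1] = 3" "nperm [2,1,1] = 3" "nperm [2,2,1] = 3" "nperm [2,1,2] = 3"
    using nperm_eq_mset[of "[2,1]" "[1,2]"] nperm_eq_mset[of "[1,2,1]" "[1,1,2]"]
      nperm_eq_mset[of "[2,1,1]" "[1,1,2]"] nperm_eq_mset[of "[2,2,1]" "[1,2,2]"]
      nperm_eq_mset[of "[2,1,2]" "[1,2,2]"]
    by simp_all
qed

lemma sum_idx_lists_le_1:
  "(\<Sum>s\<le>1. \<Sum>I\<in>idx_lists s. g s I) = g 0 [] + g 1 [1] + g 1 [2]"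
proof -
  have "idx_lists 0 = {[]}" "idx_lists 1 = {[1], [2]}"
    by (auto simp: idx_lists_def length_Suc_conv)
  moreover have "{..1::nat} = {0, 1}" by auto
  ultimately show ?thesis by (simp add: add.assoc)
qed

lemma sum_idx_lists_le_2:
  "(\<Sum>s\<le>2. \<Sum>I\<in>idx_lists s. g s I) =
    g 0 [] + g 1 [1] + g 1 [2] + g 2 [1,1] + g 2 [1,2] + g 2 [2,1] + g 2 [2,2]"
proof -
  have "idx_lists 0 = {[]}" "idx_lists 1 = {[1], [2]}" "idx_lists 2 = {[1,1], [1,2], [2,1], [2,2]}"
    by (auto simp: idx_lists_def length_Suc_conv numeral_2_eq_2)
  moreover have "{..2::nat} = {0, 1, 2}" by auto
  ultimately show ?thesis by (simp add: add.assoc)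
qed

(* On a single alpha-block, with multi-indices written p = (number of 1s, number of 2s), T_j has
   component u_(p+j) along d/du_p, S^j maps d/du_p to (p_j + 1) d/du_(p+j), and Delta^i_l = S^i T_l
   has component p_i u_(p-i+l) along d/du_p; the bound k on |p| says on which frame bundle the
   operator lives. *)
definition mi_succ :: "nat \<Rightarrow> nat \<times> nat \<Rightarrow> nat \<times> nat" where
  "mi_succ j p = (if j = 1 then (fst p + 1, snd p) else (fst p, snd p + 1))"

definition mi_pred :: "nat \<Rightarrow> nat \<times> nat \<Rightarrow> nat \<times> nat" where
  "mi_pred j p = (if j = 1 then (fst p - 1, snd p) else (fst p, snd p - 1))"

definition mi_count :: "nat \<Rightarrow> nat \<times> nat \<Rightarrow> nat" where
  "mi_count j p = (if j = 1 then fst p else snd p)"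

definition total_coef :: "nat \<Rightarrow> nat \<Rightarrow> nat \<times> nat \<Rightarrow> nat \<times> nat \<Rightarrow> real" where
  "total_coef k j p q = (if fst p + snd p \<le> k \<and> q = mi_succ j p then 1 else 0)"

definition vertical_coef :: "nat \<Rightarrow> nat \<Rightarrow> nat \<times> nat \<Rightarrow> nat \<times> nat \<Rightarrow> real" where
  "vertical_coef k j p q = (if fst q + snd q \<le> k \<and> p = mi_succ j q then real (mi_count j q + 1) else 0)"

definition fundamental_coef :: "nat \<Rightarrow> nat \<Rightarrow> nat \<times> nat \<Rightarrow> nat \<times> nat \<Rightarrow> real" where
  "fundamental_coef i l p q =
    (if 1 \<le> mi_count i p \<and> q = mi_succ l (mi_pred i p) then real (mi_count i p) else 0)"

lemma shift_coef_total:
  assumes "k \<in> {1,2}" "j \<in> {1,2}" "p \<in> mi_pairs"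
  shows "shift_coef k j (\<lambda>s I. 1 / real (nperm I)) q p = total_coef k j p q"
proof -
  have "\<forall>j\<in>{1,2}. shift_coef 1 j (\<lambda>s I. 1 / real (nperm I)) q p = total_coef 1 j p q \<and>
      shift_coef 2 j (\<lambda>s I. 1 / real (nperm I)) q p = total_coef 2 j p q"
    unfolding shift_coef_def sum_idx_lists_le_1 sum_idx_lists_le_2
    by (cases rule: mi_pairs_cases[OF assms(3)]; simp add: nperm_values nperm_values[simplified] total_coef_def mi_succ_def)
  then show ?thesis using assms(1,2) by auto
qed

lemma shift_coef_vertical:
  assumes "k \<in> {1,2}" "j \<in> {1,2}" "q \<in> mi_pairs"
  shows "shift_coef k j (\<lambda>s I. real (s + 1) / real (nperm (j # I))) p q = vertical_coef k j p q"
proof -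
  have "\<forall>j\<in>{1,2}.
      shift_coef 1 j (\<lambda>s I. real (s + 1) / real (nperm (j # I))) p q = vertical_coef 1 j p q \<and>
      shift_coef 2 j (\<lambda>s I. real (s + 1) / real (nperm (j # I))) p q = vertical_coef 2 j p q"
    unfolding shift_coef_def sum_idx_lists_le_1 sum_idx_lists_le_2
    by (cases rule: mi_pairs_cases[OF assms(3)];
        simp add: nperm_values nperm_values[simplified] vertical_coef_def mi_succ_def mi_count_def)
  then show ?thesis using assms(1,2) by auto
qed

lemma Smat_mi_mat:
  assumes "k \<in> {1,2}" "j \<in> {1,2}"
  shows "(Smat k j :: ('a::finite \<times> mi) \<Rightarrow> _) = mi_mat (vertical_coef k j)"
proof -
  have "(Smat k j :: ('a \<times> mi) \<Rightarrow> _) = shift_mat k j (\<lambda>s I. real (s + 1) / real (nperm (j # I)))"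
    by (simp add: fun_eq_iff Smat_def shift_mat_def)
  also have "\<dots> = mi_mat (shift_coef k j (\<lambda>s I. real (s + 1) / real (nperm (j # I))))"
    by (rule shift_mat_mi_mat) (use assms in auto)
  also have "\<dots> = mi_mat (vertical_coef k j)"
    by (rule mi_mat_cong) (rule shift_coef_vertical[OF assms])
  finally show ?thesis .
qed

lemma Tvf_mi_mat:
  assumes "k \<in> {1,2}" "j \<in> {1,2}"
  shows "(Tvf k j :: ('a::finite \<times> mi) vf) = linear_vf (mi_mat (total_coef k j))"
proof (intro ext)
  fix x :: "'a pt" and c
  have "Tvf k j x c = (\<Sum>d\<in>UNIV. shift_mat k j (\<lambda>s I. 1 / real (nperm I)) d c * x $ d)"
    unfolding Tvf_def shift_mat_def sum_product_swap[OF finite_atMost] sum_product_swap[OF finite_idx_lists]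
      sum_product_swap[OF finite_class.finite_UNIV]
  proof (intro sum.cong refl)
    fix s I \<alpha>
    show "1 / real (nperm I) * x $ (\<alpha>, ms (j # I)) * (if c = (\<alpha>, ms I) then 1 else 0) =
      (\<Sum>d\<in>UNIV. 1 / real (nperm I) * (if d = (\<alpha>, ms (j # I)) then 1 else 0) *
        (if c = (\<alpha>, ms I) then 1 else 0) * x $ d)"
      by (rule sum_indicator[symmetric])
  qed
  also have "\<dots> = linear_vf (mi_mat (total_coef k j)) x c"
  proof -
    have sm: "shift_mat k j (\<lambda>s I. 1 / real (nperm I)) = mi_mat (shift_coef k j (\<lambda>s I. 1 / real (nperm I)))"
      by (rule shift_mat_mi_mat) (use assms in auto)
    show ?thesis
      unfolding sm linear_vf_def
      by (intro sum.cong refl) (auto simp: mi_mat_def shift_coef_total[OF assms] mi_rep_in_mi_pairs)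
  qed
  finally show "Tvf k j x c = linear_vf (mi_mat (total_coef k j)) x c" .
qed

lemma Tvf_2_mi_mat: "j \<in> {1,2} \<Longrightarrow> (Tvf 2 j :: ('a::finite \<times> mi) vf) = linear_vf (mi_mat (total_coef 2 j))"
  by (rule Tvf_mi_mat) auto

lemma Svf_linear_vf: "Svf k j (linear_vf A) = linear_vf (mat_mul (Smat k j) A)"
  by (intro ext) (simp add: Svf_def linear_vf_mat_mul)

lemma Delta_mi_mat:
  assumes "k \<in> {1,2}" "i \<in> {1,2}" "l \<in> {1,2}"
  shows "(Delta k [i] l :: ('a::finite \<times> mi) vf) = linear_vf (mi_mat (mi_mul (vertical_coef k i) (total_coef k l)))"
  using assms by (simp add: Delta_def Tvf_mi_mat Svf_linear_vf Smat_mi_mat mat_mul_mi_mat)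

lemma Sform_eq_form_mat: "Sform k j = form_mat (Smat k j)"
  by (simp add: fun_eq_iff Sform_def form_mat_def)

lemma smooth_form_on_Sforms: "open U \<Longrightarrow> smooth_form_on U \<omega> \<Longrightarrow> smooth_form_on U (Sforms k J \<omega>)"
  by (induction J) (simp_all add: Sform_eq_form_mat smooth_form_on_form_mat)

lemma mi_mul_expand:
  "mi_mul a b p q = a p (0,0) * b (0,0) q + a p (1,0) * b (1,0) q + a p (0,1) * b (0,1) q
    + a p (2,0) * b (2,0) q + a p (1,1) * b (1,1) q + a p (0,2) * b (0,2) q
    + a p (3,0) * b (3,0) q + a p (2,1) * b (2,1) q + a p (1,2) * b (1,2) q + a p (0,3) * b (0,3) q"
  unfolding mi_mul_def mi_pairs_eq by (simp add: add.assoc)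

lemma mi_mul_vertical_total:
  assumes "p \<in> mi_pairs" "q \<in> mi_pairs" "i \<in> {1,2}" "l \<in> {1,2}"
  shows "mi_mul (vertical_coef 2 i) (total_coef 2 l) p q = fundamental_coef i l p q"
    and "fst p + snd p \<le> 2 \<Longrightarrow> mi_mul (vertical_coef 1 i) (total_coef 1 l) p q = fundamental_coef i l p q"
proof -
  have "\<forall>i\<in>{1,2}. \<forall>l\<in>{1,2}. mi_mul (vertical_coef 2 i) (total_coef 2 l) p q = fundamental_coef i l p q \<and>
     (fst p + snd p \<le> 2 \<longrightarrow> mi_mul (vertical_coef 1 i) (total_coef 1 l) p q = fundamental_coef i l p q)"
    by (cases rule: mi_pairs_cases[OF assms(1)]; cases rule: mi_pairs_cases[OF assms(2)];
        simp add: mi_mul_expand total_coef_def vertical_coef_def fundamental_coef_def mi_succ_def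
          mi_pred_def mi_count_def)
  then show "mi_mul (vertical_coef 2 i) (total_coef 2 l) p q = fundamental_coef i l p q"
    and "fst p + snd p \<le> 2 \<Longrightarrow> mi_mul (vertical_coef 1 i) (total_coef 1 l) p q = fundamental_coef i l p q"
    using assms(3,4) by blast+
qed

lemma mi_mul_vertical_fundamental:
  assumes "p \<in> mi_pairs" "q \<in> mi_pairs" "i \<in> {1,2}" "l \<in> {1,2}" "k \<in> {1,2}"
  shows "mi_mul (vertical_coef 1 k) (fundamental_coef i l) p q - mi_mul (fundamental_coef i l) (vertical_coef 1 k) p q
    = - (if k = l then vertical_coef 1 i p q else 0)"
proof -
  have "\<forall>i\<in>{1,2}. \<forall>l\<in>{1,2}. \<forall>k\<in>{1,2}.
    mi_mul (vertical_coef 1 k) (fundamental_coef i l) p q - mi_mul (fundamental_coef i l) (vertical_coef 1 k) p q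
    = - (if k = l then vertical_coef 1 i p q else 0)"
    by (cases rule: mi_pairs_cases[OF assms(1)]; cases rule: mi_pairs_cases[OF assms(2)];
        simp add: mi_mul_expand vertical_coef_def fundamental_coef_def mi_succ_def mi_pred_def mi_count_def)
  then show ?thesis using assms(3-5) by blast
qed

lemma mi_mul_total_fundamental:
  assumes "p \<in> mi_pairs" "q \<in> mi_pairs" "i \<in> {1,2}" "l \<in> {1,2}" "j \<in> {1,2}"
  shows "mi_mul (total_coef 2 j) (fundamental_coef i l) p q - mi_mul (fundamental_coef i l) (total_coef 2 j) p q
    = (if i = j then total_coef 2 l p q else 0)"
proof -
  have "\<forall>i\<in>{1,2}. \<forall>l\<in>{1,2}. \<forall>j\<in>{1,2}.
    mi_mul (total_coef 2 j) (fundamental_coef i l) p q - mi_mul (fundamental_coef i l) (total_coef 2 j) p q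
    = (if i = j then total_coef 2 l p q else 0)"
    by (cases rule: mi_pairs_cases[OF assms(1)]; cases rule: mi_pairs_cases[OF assms(2)];
        simp add: mi_mul_expand total_coef_def fundamental_coef_def mi_succ_def mi_pred_def mi_count_def)
  then show ?thesis using assms(3-5) by blast
qed

lemma Delta_fundamental:
  assumes "i \<in> {1,2}" "l \<in> {1,2}"
  shows "(Delta 2 [i] l :: ('a::finite \<times> mi) vf) = linear_vf (mi_mat (fundamental_coef i l))"
proof -
  have "mi_mat (mi_mul (vertical_coef 2 i) (total_coef 2 l)) = (mi_mat (fundamental_coef i l) :: ('a \<times> mi) \<Rightarrow> _)"
    by (rule mi_mat_cong) (rule mi_mul_vertical_total(1)[OF _ _ assms])
  then show ?thesis using assms by (simp add: Delta_mi_mat)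
qed

lemma Delta_1_fundamental:
  assumes "i \<in> {1,2}" "l \<in> {1,2}" "mi_ord (snd b) \<le> 2"
  shows "(Delta 1 [i] l :: ('a::finite \<times> mi) vf) y b = linear_vf (mi_mat (fundamental_coef i l)) y b"
proof -
  have "mi_mat (mi_mul (vertical_coef 1 i) (total_coef 1 l)) b d = mi_mat (fundamental_coef i l) b d"
    for d :: "'a \<times> mi"
    using mi_mul_vertical_total(2)[OF mi_rep_in_mi_pairs mi_rep_in_mi_pairs assms(1,2)] assms(3)
    by (simp add: mi_mat_def mi_ord_def)
  then show ?thesis using assms(1,2) by (simp add: Delta_mi_mat linear_vf_def)
qed

lemma mat_bracket_Smat_fundamental:
  assumes "k \<in> {1,2}" "i \<in> {1,2}" "l \<in> {1,2}"
  shows "mat_bracket (Smat 1 k) (mi_mat (fundamental_coef i l)) =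
    (\<lambda>u v. - (if k = l then Smat 1 i u v else 0) :: real)"
proof -
  have S: "Smat 1 k' = (mi_mat (vertical_coef 1 k') :: ('a::finite \<times> mi) \<Rightarrow> _)" if "k' \<in> {1,2}" for k'
    by (rule Smat_mi_mat) (use that in auto)
  have "mat_bracket (Smat 1 k) (mi_mat (fundamental_coef i l)) =
      (mi_mat (\<lambda>p q. - (if k = l then vertical_coef 1 i p q else 0)) :: ('a \<times> mi) \<Rightarrow> _)"
    unfolding S[OF assms(1)]
    by (rule mat_bracket_mi_mat) (rule mi_mul_vertical_fundamental[OF _ _ assms(2,3,1)])
  then show ?thesis using S[OF assms(2)] by (auto simp: mi_mat_def fun_eq_iff)
qed

lemma mat_bracket_total_fundamental:
  assumes "j \<in> {1,2}" "i \<in> {1,2}" "l \<in> {1,2}"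
  shows "mat_bracket (mi_mat (total_coef 2 j)) (mi_mat (fundamental_coef i l)) =
    (if i = j then mi_mat (total_coef 2 l) else (\<lambda>u v. 0) :: ('a::finite \<times> mi) \<Rightarrow> _)"
proof -
  have "mat_bracket (mi_mat (total_coef 2 j)) (mi_mat (fundamental_coef i l)) =
      (mi_mat (\<lambda>p q. if i = j then total_coef 2 l p q else 0) :: ('a \<times> mi) \<Rightarrow> _)"
    by (rule mat_bracket_mi_mat) (rule mi_mul_total_fundamental[OF _ _ assms(2,3,1)])
  then show ?thesis by (auto simp: mi_mat_def fun_eq_iff)
qed

section \<open>Homogeneous Lagrangians\<close>

lemma pd_higher_order_eq_0:
  assumes L: "second_order_lagrangian U L" and y: "y \<in> U" and b: "\<not> mi_ord (snd b) \<le> 2"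
  shows "pd b L y = 0"
proof -
  have "L (y + t *\<^sub>R axis b 1) = L y" for t
  proof -
    have "(y + t *\<^sub>R axis b 1) $ (\<alpha>, m) = y $ (\<alpha>, m)" if "mi_ord m \<le> 2" for \<alpha> m
      using that b by (auto simp: axis_def)
    then show ?thesis using L y unfolding second_order_lagrangian_def by blast
  qed
  moreover have "L differentiable at (y + 0 *\<^sub>R axis b 1)"
    using L y by (auto simp: second_order_lagrangian_def intro: smooth_on_differentiable)
  ultimately have "((\<lambda>t. L y) has_real_derivative pd b L y) (at 0)"
    using has_real_derivative_axis[of L y 0 b] by simp
  then show ?thesis using DERIV_const DERIV_unique by blast
qed

(* Homogeneity is assumed for the fundamental field on F^2; on F^3 it only gains components along
   third-order coordinates, in which L is constant. *)
lemma lie_fun_fundamental: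
  assumes L: "second_order_lagrangian U L" and hom: "homogeneous U L"
    and "i \<in> {1,2}" "l \<in> {1,2}" "y \<in> U"
  shows "lie_fun (linear_vf (mi_mat (fundamental_coef i l))) L y = (if i = l then L y else 0)"
proof -
  have rows: "Delta 1 [i] l y b * pd b L y = linear_vf (mi_mat (fundamental_coef i l)) y b * pd b L y" for b
  proof (cases "mi_ord (snd b) \<le> 2")
    case True
    then show ?thesis by (simp only: Delta_1_fundamental[OF assms(3,4) True])
  next
    case False
    then show ?thesis by (simp add: pd_higher_order_eq_0[OF L assms(5)])
  qed
  have "lie_fun (linear_vf (mi_mat (fundamental_coef i l))) L y = lie_fun (Delta 1 [i] l) L y"
    unfolding lie_fun_def ivf_def dfun_def by (rule sum.cong[OF refl]) (rule rows[symmetric])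
  also have "\<dots> = (if i = l then L y else 0)"
    using hom assms(3-5) unfolding homogeneous_def by blast
  finally show ?thesis .
qed

locale homogeneous_lagrangian =
  fixes U :: "'a::finite pt set" and L :: "'a pt \<Rightarrow> real" and i l :: nat
  assumes lagrangian: "second_order_lagrangian U L"
    and homogeneous: "homogeneous U L"
    and i: "i \<in> {1,2}" and l: "l \<in> {1,2}"
begin

abbreviation \<Delta> :: "('a \<times> mi) vf" where
  "\<Delta> \<equiv> linear_vf (mi_mat (fundamental_coef i l))"

lemma open_U: "open U" and smooth_L: "smooth_on U L"
  using lagrangian by (simp_all add: second_order_lagrangian_def)

lemma Sforms_differentiable: "x \<in> U \<Longrightarrow> (\<lambda>y. Sforms 1 J (dfun L) y b) differentiable at x"
  using smooth_form_on_Sforms[OF open_U smooth_form_on_dfun[OF smooth_L]]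
  by (rule smooth_form_on_differentiable[OF _ open_U])

lemma lie_form_Delta_dfun:
  assumes "y \<in> U"
  shows "lie_form \<Delta> (dfun L) y c = of_bool (i = l) * dfun L y c"
proof -
  have "lie_form \<Delta> (dfun L) y c = pd c (lie_fun \<Delta> L) y"
    by (simp add: lie_form_dfun[OF open_U smooth_L assms] dfun_def)
  also have "\<dots> = pd c (\<lambda>z. of_bool (i = l) * L z) y"
    by (rule pd_cong_open[OF open_U assms]) (simp add: lie_fun_fundamental[OF lagrangian homogeneous i l])
  also have "\<dots> = of_bool (i = l) * dfun L y c"
    using smooth_on_differentiable[OF smooth_L open_U assms] by (simp add: pd_cmult dfun_def)
  finally show ?thesis .
qed

lemma lie_form_Delta_Sform:
  assumes "k \<in> {1,2}" "\<And>b. (\<lambda>z. \<omega> z b) differentiable at y"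
  shows "lie_form \<Delta> (Sform 1 k \<omega>) y c = Sform 1 k (lie_form \<Delta> \<omega>) y c - of_bool (k = l) * Sform 1 i \<omega> y c"
proof -
  have "lie_form \<Delta> (Sform 1 k \<omega>) y c =
      Sform 1 k (lie_form \<Delta> \<omega>) y c + form_mat (mat_bracket (Smat 1 k) (mi_mat (fundamental_coef i l))) \<omega> y c"
    unfolding Sform_eq_form_mat by (rule lie_form_linear_vf_form_mat[OF assms(2)])
  also have "form_mat (mat_bracket (Smat 1 k) (mi_mat (fundamental_coef i l))) \<omega> y c =
      - (of_bool (k = l) * Sform 1 i \<omega> y c)"
    unfolding mat_bracket_Smat_fundamental[OF assms(1) i l] Sform_eq_form_mat form_mat_def
    by (cases "k = l") (simp_all add: sum_negf)
  finally show ?thesis by simp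
qed

lemma lie_form_Delta_Sform_dfun:
  assumes "y \<in> U" "m \<in> {1,2}"
  shows "lie_form \<Delta> (Sform 1 m (dfun L)) y c =
    of_bool (i = l) * Sform 1 m (dfun L) y c - of_bool (m = l) * Sform 1 i (dfun L) y c"
  using lie_form_Delta_Sform[OF assms(2) Sforms_differentiable[OF assms(1), of "[]"]]
  by (simp add: Sform_def lie_form_Delta_dfun[OF assms(1)] sum_distrib_left mult.assoc)

lemma lie_form_Delta_Sforms_dfun:
  assumes "y \<in> U" "j \<in> {1,2}" "m \<in> {1,2}"
  shows "lie_form \<Delta> (Sforms 1 [j, m] (dfun L)) y c =
      of_bool (i = l) * Sforms 1 [j, m] (dfun L) y c - of_bool (m = l) * Sforms 1 [j, i] (dfun L) y c
      - of_bool (j = l) * Sforms 1 [i, m] (dfun L) y c"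
proof -
  have "Sform 1 j (lie_form \<Delta> (Sform 1 m (dfun L))) y c =
      of_bool (i = l) * Sform 1 j (Sform 1 m (dfun L)) y c - of_bool (m = l) * Sform 1 j (Sform 1 i (dfun L)) y c"
    unfolding Sform_def[of _ j] lie_form_Delta_Sform_dfun[OF assms(1,3)]
    by (simp add: sum_subtractf left_diff_distrib sum_distrib_left mult.assoc)
  then show ?thesis
    using lie_form_Delta_Sform[OF assms(2) Sforms_differentiable[OF assms(1), of "[m]"]] by simp
qed

lemma lie_form_Delta_Tvf:
  assumes "x \<in> U" "j \<in> {1,2}" "smooth_form_on U \<eta>"
  shows "lie_form \<Delta> (lie_form (Tvf 2 j) \<eta>) x c =
    lie_form (Tvf 2 j) (lie_form \<Delta> \<eta>) x c + of_bool (i = j) * lie_form (Tvf 2 l) \<eta> x c"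
  using lie_form_linear_vf_bracket[OF open_U assms(1,3), of "mi_mat (fundamental_coef i l)"
      "mi_mat (total_coef 2 j)" c]
  unfolding Tvf_2_mi_mat[OF assms(2)] Tvf_2_mi_mat[OF l] mat_bracket_total_fundamental[OF assms(2) i l]
  by (cases "i = j") (simp_all add: algebra_simps)

lemma lie_form_Delta_Tvf_Sforms:
  assumes "x \<in> U" "j \<in> {1,2}" "m \<in> {1,2}"
  shows "lie_form \<Delta> (lie_form (Tvf 2 j) (Sforms 1 [j, m] (dfun L))) x c =
      of_bool (i = l) * lie_form (Tvf 2 j) (Sforms 1 [j, m] (dfun L)) x c
    - of_bool (m = l) * lie_form (Tvf 2 j) (Sforms 1 [j, i] (dfun L)) x c
    - of_bool (j = l) * lie_form (Tvf 2 j) (Sforms 1 [i, m] (dfun L)) x c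
    + of_bool (i = j) * lie_form (Tvf 2 l) (Sforms 1 [j, m] (dfun L)) x c"
proof -
  have d: "\<And>b. (\<lambda>y. Sforms 1 J (dfun L) y b) differentiable at x" for J
    by (rule Sforms_differentiable[OF assms(1)])
  have "lie_form (Tvf 2 j) (lie_form \<Delta> (Sforms 1 [j, m] (dfun L))) x c =
      lie_form (Tvf 2 j) (\<lambda>y b. of_bool (i = l) * Sforms 1 [j, m] (dfun L) y b
        - of_bool (m = l) * Sforms 1 [j, i] (dfun L) y b - of_bool (j = l) * Sforms 1 [i, m] (dfun L) y b) x c"
    by (rule lie_form_cong_open[OF open_U assms(1)]) (rule lie_form_Delta_Sforms_dfun[OF _ assms(2,3)])
  also have "\<dots> = of_bool (i = l) * lie_form (Tvf 2 j) (Sforms 1 [j, m] (dfun L)) x c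
    - of_bool (m = l) * lie_form (Tvf 2 j) (Sforms 1 [j, i] (dfun L)) x c
    - of_bool (j = l) * lie_form (Tvf 2 j) (Sforms 1 [i, m] (dfun L)) x c"
    unfolding Tvf_2_mi_mat[OF assms(2)] using d
    by (simp only: lie_form_linear_vf_diff lie_form_linear_vf_scale differentiable_diff
        differentiable_mult differentiable_const)
  moreover have "smooth_form_on U (Sforms 1 [j, m] (dfun L))"
    by (rule smooth_form_on_Sforms[OF open_U smooth_form_on_dfun[OF smooth_L]])
  ultimately show ?thesis
    using lie_form_Delta_Tvf[OF assms(1,2)] by simp
qed

lemma lie_form_Delta_hilbert_form_linear:
  assumes "x \<in> U" "m \<in> {1,2}"
  shows "lie_form \<Delta> (hilbert_form L m) x c = lie_form \<Delta> (Sforms 1 [m] (dfun L)) x c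
    - 1/2 * (\<Sum>j\<in>{1,2}. lie_form \<Delta> (lie_form (Tvf 2 j) (Sforms 1 [j, m] (dfun L))) x c)"
proof -
  have dS: "\<And>b. (\<lambda>y. Sforms 1 J (dfun L) y b) differentiable at x" for J
    by (rule Sforms_differentiable[OF assms(1)])
  have dT: "\<And>b. (\<lambda>y. lie_form (Tvf 2 j) (Sforms 1 [j, m] (dfun L)) y b) differentiable at x"
    if "j \<in> {1,2}" for j
    unfolding Tvf_2_mi_mat[OF that]
    by (rule lie_form_linear_vf_differentiable[OF open_U assms(1)])
      (rule smooth_form_on_Sforms[OF open_U smooth_form_on_dfun[OF smooth_L]])
  let ?\<theta> = "\<lambda>y b. \<Sum>j\<in>{1,2}. lie_form (Tvf 2 j) (Sforms 1 [j, m] (dfun L)) y b"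
  have d\<theta>: "(\<lambda>y. ?\<theta> y b) differentiable at x" for b
    by (rule differentiable_sum) (use dT in auto)
  have "lie_form \<Delta> (hilbert_form L m) x c = lie_form \<Delta> (\<lambda>y b. Sforms 1 [m] (dfun L) y b - 1/2 * ?\<theta> y b) x c"
    by (simp add: hilbert_form_def[abs_def])
  also have "\<dots> = lie_form \<Delta> (Sforms 1 [m] (dfun L)) x c - lie_form \<Delta> (\<lambda>y b. 1/2 * ?\<theta> y b) x c"
    by (rule lie_form_linear_vf_diff) (rule dS, rule differentiable_mult[OF differentiable_const d\<theta>])
  also have "lie_form \<Delta> (\<lambda>y b. 1/2 * ?\<theta> y b) x c = 1/2 * lie_form \<Delta> ?\<theta> x c"
    by (rule lie_form_linear_vf_scale) (rule d\<theta>)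
  also have "lie_form \<Delta> ?\<theta> x c = (\<Sum>j\<in>{1,2}. lie_form \<Delta> (lie_form (Tvf 2 j) (Sforms 1 [j, m] (dfun L))) x c)"
    by (rule lie_form_linear_vf_sum) (use dT in auto)
  finally show ?thesis .
qed

lemma lie_form_Delta_hilbert_form:
  assumes "x \<in> U" "m \<in> {1,2}"
  shows "lie_form \<Delta> (hilbert_form L m) x c =
    of_bool (i = l) * hilbert_form L m x c - of_bool (m = l) * hilbert_form L i x c"
proof -
  have "lie_form \<Delta> (hilbert_form L m) x c =
      of_bool (i = l) * Sforms 1 [m] (dfun L) x c - of_bool (m = l) * Sforms 1 [i] (dfun L) x c
      - 1/2 * (\<Sum>j\<in>{1,2}. of_bool (i = l) * lie_form (Tvf 2 j) (Sforms 1 [j, m] (dfun L)) x c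
        - of_bool (m = l) * lie_form (Tvf 2 j) (Sforms 1 [j, i] (dfun L)) x c
        - of_bool (j = l) * lie_form (Tvf 2 j) (Sforms 1 [i, m] (dfun L)) x c
        + of_bool (i = j) * lie_form (Tvf 2 l) (Sforms 1 [j, m] (dfun L)) x c)"
    unfolding lie_form_Delta_hilbert_form_linear[OF assms]
    using lie_form_Delta_Sform_dfun[OF assms] lie_form_Delta_Tvf_Sforms[OF assms(1) _ assms(2)]
    by simp
  also have "\<dots> = of_bool (i = l) * hilbert_form L m x c - of_bool (m = l) * hilbert_form L i x c"
    using i l assms(2) by (auto simp: hilbert_form_def algebra_simps)
  finally show ?thesis .
qed

end

theorem lemma5:
  fixes U :: "'a::finite pt set" and L :: "'a pt \<Rightarrow> real"
  assumes "second_order_lagrangian U L"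
    and "homogeneous U L"
    and "i \<in> {1,2}" and "l \<in> {1,2}" and "m \<in> {1,2}"
    and "x \<in> U"
  shows "lie_form (Delta 2 [i] l) (hilbert_form L m) x c =
           (if i = l then hilbert_form L m x c else 0)
         - (if m = l then hilbert_form L i x c else 0)"
proof -
  interpret homogeneous_lagrangian U L i l
    using assms(1-4) by unfold_locales
  show ?thesis
    using lie_form_Delta_hilbert_form[OF assms(6,5)] by (simp add: Delta_fundamental[OF assms(3,4)])
qed

end
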